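(* Let $S$ be a finite subgroup of $O(n)$. Then there exist an $S$-invariant subset $\Omega_S\subset\mathbb R^n$ which is the complement of a finite union of hyperplanes, and an open subset $U_S\subset\Omega_S$, such that $sU_S\cap U_S=\emptyset$ for all $s\in S\setminus\{I\}$ and $\bigcup_{s\in S}sU_S=\Omega_S$. *)

theory Defs
  imports "HOL-Analysis.Analysis"
begin

definition subgroup_On :: "(real^'n^'n) set \<Rightarrow> bool" where
  "subgroup_On S \<longleftrightarrow>
     (\<forall>s\<in>S. orthogonal_matrix s) \<and> mat 1 \<in> S \<and>
     (\<forall>s\<in>S. \<forall>t\<in>S. s ** t \<in> S) \<and> (\<forall>s\<in>S. matrix_inv s \<in> S)"

definition hyperplane :: "real^'n \<Rightarrow> real \<Rightarrow> (real^'n) set" where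
  "hyperplane a b = {x. a \<bullet> x = b}"

end

theory Submission
  imports Defs
begin

text \<open>Pick \<open>p\<close> with trivial stabiliser in \<open>S\<close>, i.e. off the finitely many proper fixed-point
  subspaces. Take \<open>\<Omega>\<close> to be the set of \<open>y\<close> at which the linear forms \<open>y \<mapsto> (s p) \<bullet> y\<close>,
  \<open>s \<in> S\<close>, are pairwise distinct (the complement of the hyperplanes \<open>(s p - t p) \<bullet> y = 0\<close>),
  and \<open>U\<close> the part of \<open>\<Omega>\<close> where the form of the identity is the strict maximum.
  As \<open>(s p) \<bullet> (r y) = ((r\<^sup>T s) p) \<bullet> y\<close>, the group permutes the forms: hence \<open>\<Omega>\<close> is
  invariant, \<open>s\<^sub>0\<^sup>T y \<in> U\<close> for the unique maximiser \<open>s\<^sub>0\<close> at \<open>y \<in> \<Omega>\<close>, and \<open>y, r y \<in> U\<close>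
  with \<open>r \<noteq> 1\<close> would give both \<open>(r\<^sup>T p) \<bullet> y < p \<bullet> y\<close> and \<open>p \<bullet> y < (r\<^sup>T p) \<bullet> y\<close>.\<close>

lemma inner_matrix_vector_mult_right:
  fixes A :: "real^'n^'m"
  shows "x \<bullet> (A *v y) = (transpose A *v x) \<bullet> y"
  by (simp add: dot_lmul_matrix)

lemma orthogonal_matrix_inner:
  fixes Q :: "real^'n^'n"
  assumes "orthogonal_matrix Q"
  shows "(Q *v x) \<bullet> (Q *v y) = x \<bullet> y"
  using assms
  by (simp add: inner_matrix_vector_mult_right matrix_vector_mul_assoc orthogonal_matrix_def)

lemma matrix_inv_orthogonal:
  fixes Q :: "real^'n^'n"
  assumes "orthogonal_matrix Q"
  shows "matrix_inv Q = transpose Q"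
proof -
  have "Q ** transpose Q = mat 1 \<and> transpose Q ** Q = mat 1"
    using assms by (simp add: orthogonal_matrix_def)
  then have "Q ** matrix_inv Q = mat 1"
    unfolding matrix_inv_def by (metis (mono_tags, lifting) someI)
  then have "transpose Q ** (Q ** matrix_inv Q) = transpose Q"
    by simp
  then show ?thesis
    using assms by (simp add: matrix_mul_assoc orthogonal_matrix_def)
qed

lemma orthogonal_matrix_mult_left_cancel:
  fixes Q :: "real^'n^'n"
  assumes "orthogonal_matrix Q"
  shows "Q ** A = Q ** B \<longleftrightarrow> A = B"
  by (metis assms matrix_mul_assoc matrix_mul_lid orthogonal_matrix_def)

lemma fixed_points_subset_hyperplane:
  fixes s :: "real^'n^'n"
  assumes "s \<noteq> mat 1"
  obtains a where "a \<noteq> 0" and "\<And>x. s *v x = x \<Longrightarrow> a \<bullet> x = 0"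
proof -
  obtain i where i: "(s - mat 1) $ i \<noteq> 0"
    using assms by (metis eq_iff_diff_eq_0 vec_eq_iff zero_index)
  have "(s - mat 1) $ i \<bullet> x = 0" if "s *v x = x" for x
    using that by (metis matrix_vector_mul_component matrix_vector_mul_lid
        matrix_vector_mult_diff_rdistrib right_minus_eq zero_index)
  with i show thesis
    by (rule that)
qed

lemma exists_point_moved_by_all:
  fixes M :: "(real^'n^'n) set"
  assumes "finite M" and "mat 1 \<notin> M"
  obtains p where "\<And>s. s \<in> M \<Longrightarrow> s *v p \<noteq> p"
proof -
  have "negligible {x. s *v x = x}" if "s \<in> M" for s
  proof -
    obtain a where "a \<noteq> 0" and "\<And>x. s *v x = x \<Longrightarrow> a \<bullet> x = 0"
      using fixed_points_subset_hyperplane \<open>s \<in> M\<close> \<open>mat 1 \<notin> M\<close> by metis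
    then show ?thesis
      by (blast intro: negligible_subset negligible_hyperplane)
  qed
  then have "negligible (\<Union>s\<in>M. {x. s *v x = x})"
    using assms(1) by blast
  then have "(\<Union>s\<in>M. {x. s *v x = x}) \<noteq> UNIV"
    using non_negligible_UNIV by metis
  then show thesis
    using that by blast
qed

definition generic_points :: "(real^'n^'n) set \<Rightarrow> real^'n \<Rightarrow> (real^'n) set" where
  "generic_points S p = {y. \<forall>s\<in>S. \<forall>t\<in>S. s \<noteq> t \<longrightarrow> (s *v p) \<bullet> y \<noteq> (t *v p) \<bullet> y}"

text \<open>For orthogonal \<open>s\<close>, \<open>(s p) \<bullet> y < p \<bullet> y\<close> means \<open>|y - p| < |y - s p|\<close>: a Dirichlet
  domain of the orbit of \<open>p\<close>.\<close>
definition dirichlet_cell :: "(real^'n^'n) set \<Rightarrow> real^'n \<Rightarrow> (real^'n) set" where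
  "dirichlet_cell S p = {y \<in> generic_points S p. \<forall>s\<in>S - {mat 1}. (s *v p) \<bullet> y < p \<bullet> y}"

definition orbit_hyperplanes :: "(real^'n^'n) set \<Rightarrow> real^'n \<Rightarrow> ((real^'n) \<times> real) set" where
  "orbit_hyperplanes S p = (\<lambda>(s, t). (s *v p - t *v p, 0)) ` {(s, t) \<in> S \<times> S. s \<noteq> t}"

lemma finite_orbit_hyperplanes: "finite S \<Longrightarrow> finite (orbit_hyperplanes S p)"
  unfolding orbit_hyperplanes_def by (auto intro: finite_subset[of _ "S \<times> S"])

lemma generic_points_eq_complement:
  "generic_points S p = UNIV - (\<Union>(a, b)\<in>orbit_hyperplanes S p. hyperplane a b)"
  unfolding generic_points_def orbit_hyperplanes_def hyperplane_def
  by (auto simp: inner_diff_left)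

lemma open_generic_points:
  assumes "finite S"
  shows "open (generic_points S p)"
  unfolding generic_points_eq_complement hyperplane_def
  using finite_orbit_hyperplanes[OF assms]
  by (intro open_Diff closed_UN) (auto simp: closed_hyperplane)

lemma open_dirichlet_cell:
  assumes "finite S"
  shows "open (dirichlet_cell S p)"
proof -
  have "dirichlet_cell S p = generic_points S p \<inter> (\<Inter>s\<in>S - {mat 1}. {y. (s *v p - p) \<bullet> y < 0})"
    unfolding dirichlet_cell_def by (auto simp: inner_diff_left)
  then show ?thesis
    using assms by (auto intro!: open_generic_points open_halfspace_lt)
qed

locale orthogonal_subgroup =
  fixes S :: "(real^'n^'n) set"
  assumes subgroup_On: "subgroup_On S"
begin

lemma orthogonal: "s \<in> S \<Longrightarrow> orthogonal_matrix s"
  and mat_1_mem: "mat 1 \<in> S"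
  and mult_mem: "s \<in> S \<Longrightarrow> t \<in> S \<Longrightarrow> s ** t \<in> S"
  using subgroup_On unfolding subgroup_On_def by auto

lemma transpose_mult_self: "s \<in> S \<Longrightarrow> transpose s ** s = mat 1"
  and mult_transpose_self: "s \<in> S \<Longrightarrow> s ** transpose s = mat 1"
  using orthogonal unfolding orthogonal_matrix_def by blast+

lemma transpose_mem:
  assumes "s \<in> S"
  shows "transpose s \<in> S"
proof -
  have "matrix_inv s \<in> S"
    using subgroup_On assms unfolding subgroup_On_def by blast
  then show ?thesis
    using matrix_inv_orthogonal[OF orthogonal[OF assms]] by simp
qed

lemma mult_left_cancel: "r \<in> S \<Longrightarrow> r ** s = r ** t \<longleftrightarrow> s = t"
  using orthogonal orthogonal_matrix_mult_left_cancel by blast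

lemma mult_transpose_mult_vec: "r \<in> S \<Longrightarrow> r *v (transpose r *v y) = y"
  using mult_transpose_self
  by (simp add: matrix_vector_mul_assoc del: transpose_matrix_vector)

lemma orbit_inj:
  assumes free: "\<And>s. s \<in> S - {mat 1} \<Longrightarrow> s *v p \<noteq> p"
    and "s \<in> S" "t \<in> S" "s *v p = t *v p"
  shows "s = t"
proof (rule ccontr)
  assume "s \<noteq> t"
  then have "transpose t ** s \<noteq> mat 1"
    using mult_left_cancel[OF transpose_mem[OF \<open>t \<in> S\<close>], of s t]
    by (simp add: transpose_mult_self[OF \<open>t \<in> S\<close>])
  moreover have "(transpose t ** s) *v p = p"
  proof -
    have "(transpose t ** s) *v p = transpose t *v (t *v p)"
      using \<open>s *v p = t *v p\<close>
      by (simp add: matrix_vector_mul_assoc[symmetric] del: transpose_matrix_vector)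
    also have "\<dots> = p"
      using transpose_mult_self[OF \<open>t \<in> S\<close>] by (simp only: matrix_vector_mul_assoc matrix_vector_mul_lid)
    finally show ?thesis .
  qed
  ultimately show False
    using free \<open>s \<in> S\<close> \<open>t \<in> S\<close> transpose_mem mult_mem by blast
qed

lemma orbit_hyperplanes_normal_nonzero:
  assumes "\<And>s. s \<in> S - {mat 1} \<Longrightarrow> s *v p \<noteq> p"
  shows "\<forall>(a, b)\<in>orbit_hyperplanes S p. a \<noteq> 0"
  using orbit_inj[OF assms] unfolding orbit_hyperplanes_def by auto

lemma inner_orbit_mult:
  "r \<in> S \<Longrightarrow> (s *v p) \<bullet> (r *v y) = ((transpose r ** s) *v p) \<bullet> y"
  by (simp add: inner_matrix_vector_mult_right matrix_vector_mul_assoc)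

lemma generic_points_mult_mem:
  assumes "r \<in> S" and "y \<in> generic_points S p"
  shows "r *v y \<in> generic_points S p"
  unfolding generic_points_def
proof (intro CollectI ballI impI)
  fix s t assume "s \<in> S" "t \<in> S" "s \<noteq> t"
  then have "transpose r ** s \<noteq> transpose r ** t"
    using mult_left_cancel[OF transpose_mem[OF \<open>r \<in> S\<close>]] by blast
  moreover have "transpose r ** s \<in> S" "transpose r ** t \<in> S"
    using \<open>r \<in> S\<close> \<open>s \<in> S\<close> \<open>t \<in> S\<close> transpose_mem mult_mem by auto
  ultimately show "(s *v p) \<bullet> (r *v y) \<noteq> (t *v p) \<bullet> (r *v y)"
    using assms by (simp add: inner_orbit_mult generic_points_def)
qed

lemma generic_points_invariant:
  assumes "r \<in> S"
  shows "(\<lambda>x. r *v x) ` generic_points S p = generic_points S p"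
proof
  show "(\<lambda>x. r *v x) ` generic_points S p \<subseteq> generic_points S p"
    using generic_points_mult_mem[OF assms] by blast
  show "generic_points S p \<subseteq> (\<lambda>x. r *v x) ` generic_points S p"
  proof
    fix y assume "y \<in> generic_points S p"
    then have "transpose r *v y \<in> generic_points S p"
      using generic_points_mult_mem transpose_mem assms by blast
    moreover have "y = r *v (transpose r *v y)"
      using mult_transpose_mult_vec[OF assms] by simp
    ultimately show "y \<in> (\<lambda>x. r *v x) ` generic_points S p"
      by blast
  qed
qed

lemma dirichlet_cell_disjoint:
  assumes "r \<in> S - {mat 1}"
  shows "(\<lambda>x. r *v x) ` dirichlet_cell S p \<inter> dirichlet_cell S p = {}"
proof (rule ccontr)
  assume "(\<lambda>x. r *v x) ` dirichlet_cell S p \<inter> dirichlet_cell S p \<noteq> {}"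
  then obtain y where y: "y \<in> dirichlet_cell S p" and ry: "r *v y \<in> dirichlet_cell S p"
    by auto
  have r: "r \<in> S" "orthogonal_matrix r"
    using assms orthogonal by auto
  moreover have "transpose r \<noteq> mat 1"
    using assms by (metis DiffD2 insertI1 transpose_mat transpose_transpose)
  ultimately have "transpose r \<in> S - {mat 1}"
    using transpose_mem by blast
  then have "(transpose r *v p) \<bullet> y < p \<bullet> y"
    using y unfolding dirichlet_cell_def by blast
  moreover have "(r *v p) \<bullet> (r *v y) < p \<bullet> (r *v y)"
    using ry assms unfolding dirichlet_cell_def by blast
  moreover have "(r *v p) \<bullet> (r *v y) = p \<bullet> y"
    using r by (simp add: orthogonal_matrix_inner)
  moreover have "p \<bullet> (r *v y) = (transpose r *v p) \<bullet> y"
    by (rule inner_matrix_vector_mult_right)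
  ultimately show False
    by linarith
qed

lemma dirichlet_cell_subset: "dirichlet_cell S p \<subseteq> generic_points S p"
  unfolding dirichlet_cell_def by blast

lemma generic_points_subset_orbit_dirichlet_cell:
  assumes "finite S"
  shows "generic_points S p \<subseteq> (\<Union>s\<in>S. (\<lambda>x. s *v x) ` dirichlet_cell S p)"
proof
  fix y assume y: "y \<in> generic_points S p"
  define f where "f s = (s *v p) \<bullet> y" for s
  have "Max (f ` S) \<in> f ` S"
    using assms mat_1_mem by (intro Max_in) auto
  then obtain s\<^sub>0 where s\<^sub>0: "s\<^sub>0 \<in> S" and "f s\<^sub>0 = Max (f ` S)"
    by (metis imageE)
  then have max: "f s \<le> f s\<^sub>0" if "s \<in> S" for s
    using assms that by simp
  define x where "x = transpose s\<^sub>0 *v y"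
  have y_eq: "y = s\<^sub>0 *v x"
    using mult_transpose_mult_vec[OF s\<^sub>0] by (simp add: x_def)
  have f_x: "(s *v p) \<bullet> x = f (s\<^sub>0 ** s)" for s
    using inner_orbit_mult[OF transpose_mem[OF s\<^sub>0]]
    by (simp add: f_def x_def)
  have "x \<in> dirichlet_cell S p"
    unfolding dirichlet_cell_def
  proof (intro CollectI conjI ballI)
    show "x \<in> generic_points S p"
      using generic_points_mult_mem[OF transpose_mem[OF s\<^sub>0] y] by (simp add: x_def)
    fix s assume s: "s \<in> S - {mat 1}"
    then have "s\<^sub>0 ** s \<noteq> s\<^sub>0" and "s\<^sub>0 ** s \<in> S"
      using mult_left_cancel[OF s\<^sub>0, of s "mat 1"] s\<^sub>0 mult_mem by auto
    then have "f (s\<^sub>0 ** s) \<noteq> f s\<^sub>0"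
      using y s\<^sub>0 unfolding generic_points_def f_def by blast
    with max[OF \<open>s\<^sub>0 ** s \<in> S\<close>] have "f (s\<^sub>0 ** s) < f s\<^sub>0"
      by linarith
    then show "(s *v p) \<bullet> x < p \<bullet> x"
      using f_x[of s] f_x[of "mat 1"] by simp
  qed
  then show "y \<in> (\<Union>s\<in>S. (\<lambda>x. s *v x) ` dirichlet_cell S p)"
    using y_eq s\<^sub>0 by blast
qed

lemma orbit_dirichlet_cell:
  assumes "finite S"
  shows "(\<Union>s\<in>S. (\<lambda>x. s *v x) ` dirichlet_cell S p) = generic_points S p"
proof
  show "(\<Union>s\<in>S. (\<lambda>x. s *v x) ` dirichlet_cell S p) \<subseteq> generic_points S p"
  proof (rule UN_least)
    fix s assume "s \<in> S"
    then show "(\<lambda>x. s *v x) ` dirichlet_cell S p \<subseteq> generic_points S p"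
      using generic_points_invariant[of s p] dirichlet_cell_subset by (metis image_mono)
  qed
  show "generic_points S p \<subseteq> (\<Union>s\<in>S. (\<lambda>x. s *v x) ` dirichlet_cell S p)"
    using assms by (rule generic_points_subset_orbit_dirichlet_cell)
qed

end

theorem lemmaA1:
  fixes S :: "(real^'n^'n) set"
  assumes "subgroup_On S" and "finite S"
  shows "\<exists>(\<Omega> :: (real^'n) set) (U :: (real^'n) set) (H :: ((real^'n) \<times> real) set).
           finite H \<and> (\<forall>(a, b)\<in>H. a \<noteq> 0) \<and>
           \<Omega> = UNIV - (\<Union>(a, b)\<in>H. hyperplane a b) \<and>
           (\<forall>s\<in>S. (\<lambda>x. s *v x) ` \<Omega> = \<Omega>) \<and>
           open U \<and> U \<subseteq> \<Omega> \<and>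
           (\<forall>s\<in>S - {mat 1}. (\<lambda>x. s *v x) ` U \<inter> U = {}) \<and>
           (\<Union>s\<in>S. (\<lambda>x. s *v x) ` U) = \<Omega>"
proof -
  interpret orthogonal_subgroup S
    by (rule orthogonal_subgroup.intro) (rule assms(1))
  obtain p where free: "\<And>s. s \<in> S - {mat 1} \<Longrightarrow> s *v p \<noteq> p"
    using exists_point_moved_by_all[of "S - {mat 1}"] assms(2) by blast
  show ?thesis
  proof (rule exI[of _ "generic_points S p"], rule exI[of _ "dirichlet_cell S p"],
      rule exI[of _ "orbit_hyperplanes S p"], intro conjI)
    show "finite (orbit_hyperplanes S p)"
      using assms(2) by (rule finite_orbit_hyperplanes)
    show "\<forall>(a, b)\<in>orbit_hyperplanes S p. a \<noteq> 0"
      using free by (rule orbit_hyperplanes_normal_nonzero)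
    show "generic_points S p = UNIV - (\<Union>(a, b)\<in>orbit_hyperplanes S p. hyperplane a b)"
      by (rule generic_points_eq_complement)
    show "\<forall>s\<in>S. (\<lambda>x. s *v x) ` generic_points S p = generic_points S p"
      using generic_points_invariant by blast
    show "open (dirichlet_cell S p)"
      using assms(2) by (rule open_dirichlet_cell)
    show "dirichlet_cell S p \<subseteq> generic_points S p"
      by (rule dirichlet_cell_subset)
    show "\<forall>s\<in>S - {mat 1}. (\<lambda>x. s *v x) ` dirichlet_cell S p \<inter> dirichlet_cell S p = {}"
      using dirichlet_cell_disjoint by blast
    show "(\<Union>s\<in>S. (\<lambda>x. s *v x) ` dirichlet_cell S p) = generic_points S p"
      using assms(2) by (rule orbit_dirichlet_cell)
  qed
qed

end
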